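(* Let $(M,F)$ be a conic pseudo-Finsler surface and $\overline F=e^\phi F$ an anisotropic conformal change. Let $\mathcal J=S(\mathcal I)=F\mathcal I_{,1}$ and $\overline{\mathcal J}=\overline S(\overline{\mathcal I})$ be the Landsberg scalars of $F$ and $\overline F$. Then $$F\overline{\mathcal J}=F\sqrt{\varepsilon\rho}\,\mathcal J+\frac{\sqrt{\varepsilon\rho}}{2\rho}\Big[(F^2\rho_{,1}-2\varepsilon Q\rho_{;2})\Big(\mathcal I+2\varepsilon\phi_{;2}+\frac{\varepsilon\rho_{;2}}{2\rho}\Big)+F^2(4\varepsilon\rho\phi_{;2,1}-\varepsilon\rho_{;2,1})-2Q(2\varepsilon\rho\mathcal I_{;2}+4\rho\phi_{;2;2}-\rho_{;2;2})\Big].$$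
   Context: Throughout, $M$ is a smooth $2$-dimensional manifold, $TM_0$ its slit tangent bundle with induced local coordinates $(x^i,y^i)$, $\partial_i=\partial/\partial x^i$, $\dot\partial_i=\partial/\partial y^i$. A function is called $h(r)$ if it is positively homogeneous of degree $r$ in $y$. A conic pseudo-Finsler surface $(M,F)$ consists of a conic subbundle $\mathcal A\subset TM_0$ (an open set invariant under $y\mapsto\lambda y$, $\lambda>0$, projecting onto $M$) and a smooth $h(1)$ function $F:\mathcal A\to\mathbb R$ such that $g_{ij}=\frac12\dot\partial_i\dot\partial_jF^2$ is nondegenerate. Put $\ell_i=\dot\partial_iF$, $\ell^i=y^i/F$. Modified Berwald frame: $\varepsilon\in\{1,-1\}$ and a covector $m_i$ satisfy $g_{ij}=\ell_i\ell_j+\varepsilon m_im_j$, $m^i=g^{ij}m_j$, so $\ell^i\ell_i=1$, $\ell^im_i=0$, $m^im_i=\varepsilon$. The main scalar $\mathcal I$ ($h(0)$) is defined by $FC_{ijk}=\mathcal I\,m_im_jm_k$, where $C_{ijk}=\frac14\dot\partial_i\dot\partial_j\dot\partial_kF^2$. The geodesic spray of $F$ is $S=y^i\partial_i-2G^i\dot\partial_i$; $G^i_j=\dot\partial_jG^i$, $\delta_i=\partial_i-G^j_i\dot\partial_j$. For a smooth function $f$: $f_{;1}=y^i\dot\partial_if$, $f_{;2}=\varepsilon Fm^i\dot\partial_if$, $f_{,1}=\ell^i\delta_if$, $f_{,2}=\varepsilon m^i\delta_if$; iterated derivatives are read left to right, e.g. $f_{,1;2}=(f_{,1})_{;2}$,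 $f_{;2,1}=(f_{;2})_{,1}$. Anisotropic conformal change: $\phi$ is a smooth $h(0)$ function on $\mathcal A$ with $F^2(\dot\partial_i\dot\partial_j\phi+\dot\partial_i\phi\,\dot\partial_j\phi)m^im^j+\varepsilon\ne0$, and $\overline F=e^{\phi}F$. Set $\sigma=\phi_{;2;2}+\varepsilon\mathcal I\phi_{;2}+2(\phi_{;2})^2$, $\rho=1/(\sigma+\varepsilon-(\phi_{;2})^2)$ (with $\varepsilon\rho>0$), $2Q=\varepsilon\rho F^2(\phi_{;2}\phi_{,1}+\phi_{,1;2}-2\phi_{,2})$, $2P=-\rho F^2\phi_{;2}(\phi_{;2}\phi_{,1}+\phi_{,1;2}-2\phi_{,2})+F^2\phi_{,1}$. The spray coefficients of $\overline F$ are $\overline G^i=G^i+Qm^i+P\ell^i$, $\overline S=y^i\partial_i-2\overline G^i\dot\partial_i$, and the main scalar of $\overline F$ is $\overline{\mathcal I}=\sqrt{\varepsilon\rho}[\mathcal I+2\varepsilon\phi_{;2}-\frac\varepsilon2(\ln\rho)_{;2}]$. *)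

theory Defs
  imports "HOL-Analysis.Analysis"
begin

text \<open>Local coordinate model of the slit tangent bundle over a chart of the surface M:
 a point of TM is a pair (x, y) with x, y in R^2.  Functions on (subsets of) TM are
 functions pt => real.\<close>

type_synonym pt = "(real^2) \<times> (real^2)"

definition dX :: "2 \<Rightarrow> (pt \<Rightarrow> real) \<Rightarrow> pt \<Rightarrow> real" where
  "dX i f p = frechet_derivative f (at p) (axis i 1, 0)"

definition dY :: "2 \<Rightarrow> (pt \<Rightarrow> real) \<Rightarrow> pt \<Rightarrow> real" where
  "dY i f p = frechet_derivative f (at p) (0, axis i 1)"

fun iter_pd :: "(bool \<times> 2) list \<Rightarrow> (pt \<Rightarrow> real) \<Rightarrow> pt \<Rightarrow> real" where
  "iter_pd [] f = f"
| "iter_pd ((b, i) # ops) f = (if b then dY i else dX i) (iter_pd ops f)"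

definition smooth_on :: "pt set \<Rightarrow> (pt \<Rightarrow> real) \<Rightarrow> bool" where
  "smooth_on A f \<longleftrightarrow> (\<forall>ops. iter_pd ops f differentiable_on A)"

definition conic :: "pt set \<Rightarrow> bool" where
  "conic A \<longleftrightarrow> open A \<and> (\<forall>p\<in>A. snd p \<noteq> 0) \<and>
     (\<forall>p\<in>A. \<forall>c::real. c > 0 \<longrightarrow> (fst p, c *\<^sub>R snd p) \<in> A)"

definition homog :: "pt set \<Rightarrow> real \<Rightarrow> (pt \<Rightarrow> real) \<Rightarrow> bool" where
  "homog A r f \<longleftrightarrow> (\<forall>p\<in>A. \<forall>c::real. c > 0 \<longrightarrow> f (fst p, c *\<^sub>R snd p) = c powr r * f p)"

definition gmet :: "(pt \<Rightarrow> real) \<Rightarrow> 2 \<Rightarrow> 2 \<Rightarrow> pt \<Rightarrow> real" where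
  "gmet F i j p = 1/2 * dY i (dY j (\<lambda>q. (F q)\<^sup>2)) p"

definition gmat :: "(pt \<Rightarrow> real) \<Rightarrow> pt \<Rightarrow> real^2^2" where
  "gmat F p = (\<chi> i j. gmet F i j p)"

definition ginv :: "(pt \<Rightarrow> real) \<Rightarrow> 2 \<Rightarrow> 2 \<Rightarrow> pt \<Rightarrow> real" where
  "ginv F i j p = matrix_inv (gmat F p) $ i $ j"

definition cartan :: "(pt \<Rightarrow> real) \<Rightarrow> 2 \<Rightarrow> 2 \<Rightarrow> 2 \<Rightarrow> pt \<Rightarrow> real" where
  "cartan F i j k p = 1/4 * dY i (dY j (dY k (\<lambda>q. (F q)\<^sup>2))) p"

definition ell_up :: "(pt \<Rightarrow> real) \<Rightarrow> 2 \<Rightarrow> pt \<Rightarrow> real" where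
  "ell_up F i p = snd p $ i / F p"

definition m_up :: "(pt \<Rightarrow> real) \<Rightarrow> (2 \<Rightarrow> pt \<Rightarrow> real) \<Rightarrow> 2 \<Rightarrow> pt \<Rightarrow> real" where
  "m_up F m i p = (\<Sum>j\<in>UNIV. ginv F i j p * m j p)"

definition sprayG :: "(pt \<Rightarrow> real) \<Rightarrow> 2 \<Rightarrow> pt \<Rightarrow> real" where
  "sprayG F i p = 1/4 * (\<Sum>l\<in>UNIV. ginv F i l p *
      ((\<Sum>k\<in>UNIV. snd p $ k * dX k (dY l (\<lambda>q. (F q)\<^sup>2)) p) - dX l (\<lambda>q. (F q)\<^sup>2) p))"

definition Gij :: "(pt \<Rightarrow> real) \<Rightarrow> 2 \<Rightarrow> 2 \<Rightarrow> pt \<Rightarrow> real" where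
  "Gij F i j p = dY j (sprayG F i) p"

definition hdelta :: "(pt \<Rightarrow> real) \<Rightarrow> 2 \<Rightarrow> (pt \<Rightarrow> real) \<Rightarrow> pt \<Rightarrow> real" where
  "hdelta F i f p = dX i f p - (\<Sum>j\<in>UNIV. Gij F j i p * dY j f p)"

definition spray_with :: "(2 \<Rightarrow> pt \<Rightarrow> real) \<Rightarrow> (pt \<Rightarrow> real) \<Rightarrow> pt \<Rightarrow> real" where
  "spray_with G f p = (\<Sum>i\<in>UNIV. snd p $ i * dX i f p) - 2 * (\<Sum>i\<in>UNIV. G i p * dY i f p)"

definition spray_op :: "(pt \<Rightarrow> real) \<Rightarrow> (pt \<Rightarrow> real) \<Rightarrow> pt \<Rightarrow> real" where
  "spray_op F f = spray_with (sprayG F) f"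

text \<open>Berwald frame derivatives  f_{;1}, f_{;2}, f_{,1}, f_{,2}.\<close>
definition vd1 :: "(pt \<Rightarrow> real) \<Rightarrow> pt \<Rightarrow> real" where
  "vd1 f p = (\<Sum>i\<in>UNIV. snd p $ i * dY i f p)"

definition vd2 :: "(pt \<Rightarrow> real) \<Rightarrow> real \<Rightarrow> (2 \<Rightarrow> pt \<Rightarrow> real) \<Rightarrow> (pt \<Rightarrow> real) \<Rightarrow> pt \<Rightarrow> real" where
  "vd2 F eps m f p = eps * F p * (\<Sum>i\<in>UNIV. m_up F m i p * dY i f p)"

definition hd1 :: "(pt \<Rightarrow> real) \<Rightarrow> (pt \<Rightarrow> real) \<Rightarrow> pt \<Rightarrow> real" where
  "hd1 F f p = (\<Sum>i\<in>UNIV. ell_up F i p * hdelta F i f p)"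

definition hd2 :: "(pt \<Rightarrow> real) \<Rightarrow> real \<Rightarrow> (2 \<Rightarrow> pt \<Rightarrow> real) \<Rightarrow> (pt \<Rightarrow> real) \<Rightarrow> pt \<Rightarrow> real" where
  "hd2 F eps m f p = eps * (\<Sum>i\<in>UNIV. m_up F m i p * hdelta F i f p)"

definition berwald_frame :: "pt set \<Rightarrow> (pt \<Rightarrow> real) \<Rightarrow> real \<Rightarrow> (2 \<Rightarrow> pt \<Rightarrow> real) \<Rightarrow> bool" where
  "berwald_frame A F eps m \<longleftrightarrow> (eps = 1 \<or> eps = -1) \<and> (\<forall>i. smooth_on A (m i)) \<and>
     (\<forall>p\<in>A. \<forall>i j. gmet F i j p = dY i F p * dY j F p + eps * m i p * m j p)"

definition main_scalar :: "pt set \<Rightarrow> (pt \<Rightarrow> real) \<Rightarrow> (2 \<Rightarrow> pt \<Rightarrow> real) \<Rightarrow> (pt \<Rightarrow> real) \<Rightarrow> bool" where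
  "main_scalar A F m I \<longleftrightarrow>
     (\<forall>p\<in>A. \<forall>i j k. F p * cartan F i j k p = I p * m i p * m j p * m k p)"

definition conic_pseudo_finsler :: "pt set \<Rightarrow> (pt \<Rightarrow> real) \<Rightarrow> bool" where
  "conic_pseudo_finsler A F \<longleftrightarrow> conic A \<and> smooth_on A F \<and> homog A 1 F \<and>
     (\<forall>p\<in>A. F p \<noteq> 0) \<and> (\<forall>p\<in>A. det (gmat F p) \<noteq> 0)"

definition admissible_phi :: "pt set \<Rightarrow> (pt \<Rightarrow> real) \<Rightarrow> real \<Rightarrow> (2 \<Rightarrow> pt \<Rightarrow> real) \<Rightarrow> (pt \<Rightarrow> real) \<Rightarrow> bool" where
  "admissible_phi A F eps m phi \<longleftrightarrow> smooth_on A phi \<and> homog A 0 phi \<and>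
     (\<forall>p\<in>A. (F p)\<^sup>2 * (\<Sum>i\<in>UNIV. \<Sum>j\<in>UNIV. (dY i (dY j phi) p + dY i phi p * dY j phi p)
                 * m_up F m i p * m_up F m j p) + eps \<noteq> 0)"

definition sigmaC where
  "sigmaC F eps m I phi p = vd2 F eps m (vd2 F eps m phi) p + eps * I p * vd2 F eps m phi p
     + 2 * (vd2 F eps m phi p)\<^sup>2"

definition rhoC where
  "rhoC F eps m I phi p = 1 / (sigmaC F eps m I phi p + eps - (vd2 F eps m phi p)\<^sup>2)"

definition auxK where
  "auxK F eps m phi p = vd2 F eps m phi p * hd1 F phi p + vd2 F eps m (hd1 F phi) p
     - 2 * hd2 F eps m phi p"

definition QC where
  "QC F eps m I phi p = eps * rhoC F eps m I phi p * (F p)\<^sup>2 * auxK F eps m phi p / 2"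

definition PC where
  "PC F eps m I phi p = (- rhoC F eps m I phi p * (F p)\<^sup>2 * vd2 F eps m phi p * auxK F eps m phi p
     + (F p)\<^sup>2 * hd1 F phi p) / 2"

text \<open>Spray coefficients and main scalar of  bar F = e^phi F  (as given in the setup).\<close>
definition GbarC where
  "GbarC F eps m I phi i p = sprayG F i p + QC F eps m I phi p * m_up F m i p
     + PC F eps m I phi p * ell_up F i p"

definition IbarC where
  "IbarC F eps m I phi p = sqrt (eps * rhoC F eps m I phi p) *
     (I p + 2 * eps * vd2 F eps m phi p
      - eps / 2 * vd2 F eps m (\<lambda>q. ln \<bar>rhoC F eps m I phi q\<bar>) p)"

end

theory Submission
  imports Defs
begin

text \<open>
  Write \<open>Ibar = sqrt(\<epsilon>\<rho>) K\<close> with \<open>K = I + 2\<epsilon> \<phi>;2 - \<epsilon> \<rho>;2 / (2\<rho>)\<close>.  At a point, the spray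
  \<open>S\<close> of \<open>F\<close> and the vertical field \<open>\<epsilon> F m\<^sup>i \<partial>/\<partial>y\<^sup>i\<close> act as directional derivatives, and the
  spray of \<open>Fbar\<close> differs from \<open>S\<close> by \<open>-2Q\<close> times the latter and \<open>-2P/F\<close> times
  \<open>y\<^sup>i \<partial>/\<partial>y\<^sup>i\<close>.  Since \<open>\<rho>\<close>, \<open>I\<close>, \<open>\<phi>;2\<close> and \<open>\<rho>;2\<close> are homogeneous of degree 0, Euler's
  theorem kills the \<open>P\<close>-term; the product, quotient and chain rules together with
  \<open>S f = F f,1\<close> turn the rest into the stated expression.  Most of the work is the
  smoothness and homogeneity of these functions, in particular of \<open>I\<close>, which is only
  given implicitly by \<open>F C\<^sub>i\<^sub>j\<^sub>k = I m\<^sub>i m\<^sub>j m\<^sub>k\<close>.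
\<close>

section \<open>Directional derivatives\<close>

definition dir_deriv :: "pt \<Rightarrow> (pt \<Rightarrow> real) \<Rightarrow> pt \<Rightarrow> real" where
  "dir_deriv v f p = frechet_derivative f (at p) v"

lemma dir_deriv_eq: "(f has_derivative f') (at p) \<Longrightarrow> dir_deriv v f p = f' v"
  unfolding dir_deriv_def using frechet_derivative_at by metis

lemma has_derivative_dir_deriv:
  "f differentiable (at p) \<Longrightarrow> (f has_derivative (\<lambda>v. dir_deriv v f p)) (at p)"
  unfolding dir_deriv_def using frechet_derivative_works by metis

lemma dX_eq_dir_deriv: "dX i f p = dir_deriv (axis i 1, 0) f p"
  by (simp add: dX_def dir_deriv_def)

lemma dY_eq_dir_deriv: "dY i f p = dir_deriv (0, axis i 1) f p"
  by (simp add: dY_def dir_deriv_def)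

lemma dir_deriv_cong_open:
  assumes "open U" "p \<in> U" "\<And>q. q \<in> U \<Longrightarrow> f q = g q"
  shows "dir_deriv v f p = dir_deriv v g p"
proof -
  have "\<And>D. (f has_derivative D) (at p) \<longleftrightarrow> (g has_derivative D) (at p)"
    using has_derivative_transform_within_open[OF _ assms(1,2)] assms(3) by metis
  then have "frechet_derivative f (at p) = frechet_derivative g (at p)"
    unfolding frechet_derivative_def by presburger
  then show ?thesis by (simp add: dir_deriv_def)
qed

lemma differentiable_cong_open:
  fixes f g :: "pt \<Rightarrow> real"
  assumes "open U" "p \<in> U" "\<And>q. q \<in> U \<Longrightarrow> f q = g q" "f differentiable (at p)"
  shows "g differentiable (at p)"
  using assms has_derivative_transform_within_open unfolding differentiable_def by metis

lemma dir_deriv_add: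
  "f differentiable (at p) \<Longrightarrow> g differentiable (at p) \<Longrightarrow>
   dir_deriv v (\<lambda>q. f q + g q) p = dir_deriv v f p + dir_deriv v g p"
  by (rule dir_deriv_eq) (intro has_derivative_add has_derivative_dir_deriv)

lemma dir_deriv_diff:
  "f differentiable (at p) \<Longrightarrow> g differentiable (at p) \<Longrightarrow>
   dir_deriv v (\<lambda>q. f q - g q) p = dir_deriv v f p - dir_deriv v g p"
  by (rule dir_deriv_eq) (intro has_derivative_diff has_derivative_dir_deriv)

lemma dir_deriv_mult:
  "f differentiable (at p) \<Longrightarrow> g differentiable (at p) \<Longrightarrow>
   dir_deriv v (\<lambda>q. f q * g q) p = dir_deriv v f p * g p + f p * dir_deriv v g p"
  by (rule dir_deriv_eq, rule has_derivative_eq_rhs,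
      rule has_derivative_mult[OF has_derivative_dir_deriv has_derivative_dir_deriv]) auto

lemma dir_deriv_const: "dir_deriv v (\<lambda>q. c) p = 0"
  by (rule dir_deriv_eq) auto

lemma dir_deriv_cmult:
  "f differentiable (at p) \<Longrightarrow> dir_deriv v (\<lambda>q. c * f q) p = c * dir_deriv v f p"
  using dir_deriv_mult[of "\<lambda>q. c" p f v] by (simp add: dir_deriv_const)

lemma dir_deriv_compose:
  "f differentiable (at p) \<Longrightarrow> (g has_real_derivative D) (at (f p)) \<Longrightarrow>
   dir_deriv v (\<lambda>q. g (f q)) p = D * dir_deriv v f p"
  by (rule dir_deriv_eq,
      rule has_derivative_compose[OF has_derivative_dir_deriv has_field_derivative_imp_has_derivative])

lemma differentiable_compose_real:
  fixes f :: "pt \<Rightarrow> real"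
  shows "f differentiable (at p) \<Longrightarrow> (g has_real_derivative D) (at (f p)) \<Longrightarrow>
    (\<lambda>q. g (f q)) differentiable (at p)"
  using has_derivative_compose[OF has_derivative_dir_deriv has_field_derivative_imp_has_derivative]
  unfolding differentiable_def by blast

lemma dir_deriv_divide:
  "f differentiable (at p) \<Longrightarrow> g differentiable (at p) \<Longrightarrow> g p \<noteq> 0 \<Longrightarrow>
   dir_deriv v (\<lambda>q. f q / g q) p = (dir_deriv v f p * g p - f p * dir_deriv v g p) / (g p)\<^sup>2"
  by (rule dir_deriv_eq, rule has_derivative_eq_rhs,
      rule has_derivative_divide[OF has_derivative_dir_deriv has_derivative_dir_deriv])
     (auto simp: field_simps power2_eq_square)

lemma dir_deriv_add_vector:
  "f differentiable (at p) \<Longrightarrow> dir_deriv (v + w) f p = dir_deriv v f p + dir_deriv w f p"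
  unfolding dir_deriv_def using linear_frechet_derivative[of f "at p"] by (simp add: linear_add)

lemma dir_deriv_scaleR_vector:
  "f differentiable (at p) \<Longrightarrow> dir_deriv (a *\<^sub>R v) f p = a * dir_deriv v f p"
  unfolding dir_deriv_def using linear_frechet_derivative[of f "at p"] by (simp add: linear_scale)

lemma dir_deriv_eq_sum_partials:
  assumes "f differentiable (at p)"
  shows "dir_deriv (\<chi> i. a i, \<chi> i. b i) f p
     = (\<Sum>i\<in>UNIV. a i * dX i f p) + (\<Sum>i\<in>UNIV. b i * dY i f p)"
proof -
  have v: "((\<chi> i. a i, \<chi> i. b i)::pt) = (a 1 *\<^sub>R (axis 1 1, 0) + a 2 *\<^sub>R (axis 2 1, 0))
      + (b 1 *\<^sub>R (0, axis 1 1) + b 2 *\<^sub>R (0, axis 2 1))"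
    by (simp add: vec_eq_iff forall_2 axis_def)
  show ?thesis
    unfolding v dir_deriv_add_vector[OF assms] dir_deriv_scaleR_vector[OF assms]
    by (simp add: sum_2 dX_eq_dir_deriv dY_eq_dir_deriv)
qed

lemma has_real_derivative_ln_abs:
  "(x::real) \<noteq> 0 \<Longrightarrow> ((\<lambda>x. ln \<bar>x\<bar>) has_real_derivative 1 / x) (at x)"
proof (cases "x > 0")
  case True
  show ?thesis
    by (rule has_field_derivative_transform_within_open[OF DERIV_ln_divide[OF True], of "{0<..}"])
       (use True in auto)
next
  case False
  moreover assume "x \<noteq> 0"
  ultimately have neg: "x < 0" by simp
  have "((\<lambda>x. ln (- x)) has_real_derivative 1 / x) (at x)"
    using DERIV_chain2[OF DERIV_ln_divide, of "\<lambda>x. - x" x "- 1"] neg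
    by (auto intro!: derivative_eq_intros)
  then show ?thesis
    by (rule has_field_derivative_transform_within_open[of _ _ _ "{..<0}"]) (use neg in auto)
qed

section \<open>Finite and infinite differentiability\<close>

lemma iter_pd_append: "iter_pd (xs @ ys) f = iter_pd xs (iter_pd ys f)"
  by (induction xs) auto

lemma iter_pd_cong_open:
  assumes "open U" "\<And>q. q \<in> U \<Longrightarrow> f q = g q"
  shows "q \<in> U \<Longrightarrow> iter_pd ops f q = iter_pd ops g q"
proof (induction ops arbitrary: q)
  case Nil
  then show ?case using assms(2) by simp
next
  case (Cons op ops)
  then show ?case
    by (cases op) (auto simp: dX_eq_dir_deriv dY_eq_dir_deriv intro: dir_deriv_cong_open[OF assms(1)])
qed

definition diff_upto :: "pt set \<Rightarrow> nat \<Rightarrow> (pt \<Rightarrow> real) \<Rightarrow> bool" where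
  "diff_upto U k f \<longleftrightarrow> (\<forall>ops. length ops \<le> k \<longrightarrow> iter_pd ops f differentiable_on U)"

lemma smooth_on_iff_diff_upto: "smooth_on U f \<longleftrightarrow> (\<forall>k. diff_upto U k f)"
  unfolding smooth_on_def diff_upto_def by auto

lemma diff_upto_0: "diff_upto U 0 f \<longleftrightarrow> f differentiable_on U"
  unfolding diff_upto_def by auto

lemma diff_upto_Suc:
  "diff_upto U (Suc k) f \<longleftrightarrow> f differentiable_on U \<and> (\<forall>op. diff_upto U k (iter_pd [op] f))"
proof
  assume f: "diff_upto U (Suc k) f"
  have "diff_upto U k (iter_pd [op] f)" for op
    unfolding diff_upto_def
  proof (intro allI impI)
    fix ops :: "(bool \<times> 2) list"
    assume "length ops \<le> k"
    then show "iter_pd ops (iter_pd [op] f) differentiable_on U"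
      using f[unfolded diff_upto_def, rule_format, of "ops @ [op]"] by (simp add: iter_pd_append)
  qed
  moreover have "f differentiable_on U"
    using f[unfolded diff_upto_def, rule_format, of "[]"] by simp
  ultimately show "f differentiable_on U \<and> (\<forall>op. diff_upto U k (iter_pd [op] f))" by blast
next
  assume f: "f differentiable_on U \<and> (\<forall>op. diff_upto U k (iter_pd [op] f))"
  show "diff_upto U (Suc k) f"
    unfolding diff_upto_def
  proof (intro allI impI)
    fix ops :: "(bool \<times> 2) list"
    assume "length ops \<le> Suc k"
    then show "iter_pd ops f differentiable_on U"
      using f by (cases ops rule: rev_cases) (auto simp: diff_upto_def iter_pd_append)
  qed
qed

lemma diff_upto_Suc_imp: "diff_upto U (Suc k) f \<Longrightarrow> diff_upto U k f"
  unfolding diff_upto_def by (meson le_SucI)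

lemma diff_upto_Suc_imp_differentiable:
  assumes "open U" "diff_upto U (Suc k) f" "q \<in> U"
  shows "f differentiable (at q)"
  using assms(2) differentiable_on_eq_differentiable_at[OF assms(1)] assms(3)
  unfolding diff_upto_Suc by blast

lemma diff_upto_cong:
  assumes "open U" "\<And>q. q \<in> U \<Longrightarrow> f q = g q" "diff_upto U k f"
  shows "diff_upto U k g"
  unfolding diff_upto_def
proof (intro allI impI)
  fix ops :: "(bool \<times> 2) list"
  assume "length ops \<le> k"
  then have f: "iter_pd ops f differentiable_on U" using assms(3) unfolding diff_upto_def by blast
  show "iter_pd ops g differentiable_on U"
    unfolding differentiable_on_eq_differentiable_at[OF assms(1)]
  proof
    fix q
    assume q: "q \<in> U"
    show "iter_pd ops g differentiable at q"
      by (rule differentiable_cong_open[OF assms(1) q iter_pd_cong_open[OF assms(1,2)]])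
         (use f q differentiable_on_eq_differentiable_at[OF assms(1)] in blast)+
  qed
qed

lemma diff_upto_const: "diff_upto U k (\<lambda>q. c)"
proof (induction k arbitrary: c)
  case 0
  then show ?case by (simp add: diff_upto_0)
next
  case (Suc k)
  have "iter_pd [op] (\<lambda>q. c) = (\<lambda>q. 0)" for op
    by (cases op) (auto simp: dX_eq_dir_deriv dY_eq_dir_deriv dir_deriv_const)
  then show ?case using Suc by (simp add: diff_upto_Suc)
qed

lemma iter_pd_single: "iter_pd [(b, i)] f q = dir_deriv (if b then (0, axis i 1) else (axis i 1, 0)) f q"
  by (simp add: dX_eq_dir_deriv dY_eq_dir_deriv)

lemma diff_upto_add:
  assumes "open U"
  shows "diff_upto U k f \<Longrightarrow> diff_upto U k g \<Longrightarrow> diff_upto U k (\<lambda>q. f q + g q)"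
proof (induction k arbitrary: f g)
  case 0
  then show ?case by (simp add: diff_upto_0)
next
  case (Suc k)
  have "diff_upto U k (iter_pd [(b, i)] (\<lambda>q. f q + g q))" for b i
  proof (rule diff_upto_cong[OF assms])
    show "diff_upto U k (\<lambda>q. iter_pd [(b, i)] f q + iter_pd [(b, i)] g q)"
      using Suc by (simp add: diff_upto_Suc del: iter_pd.simps)
    show "iter_pd [(b, i)] f q + iter_pd [(b, i)] g q = iter_pd [(b, i)] (\<lambda>q. f q + g q) q"
      if "q \<in> U" for q
      using Suc.prems that diff_upto_Suc_imp_differentiable[OF assms]
      by (simp only: iter_pd_single dir_deriv_add)
  qed
  moreover have "(\<lambda>q. f q + g q) differentiable_on U"
    using Suc.prems by (simp add: diff_upto_Suc)
  ultimately show ?case unfolding diff_upto_Suc split_paired_All by blast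
qed

lemma diff_upto_mult:
  assumes "open U"
  shows "diff_upto U k f \<Longrightarrow> diff_upto U k g \<Longrightarrow> diff_upto U k (\<lambda>q. f q * g q)"
proof (induction k arbitrary: f g)
  case 0
  then show ?case by (simp add: diff_upto_0)
next
  case (Suc k)
  have "diff_upto U k (iter_pd [(b, i)] (\<lambda>q. f q * g q))" for b i
  proof (rule diff_upto_cong[OF assms])
    show "diff_upto U k (\<lambda>q. iter_pd [(b, i)] f q * g q + f q * iter_pd [(b, i)] g q)"
      using Suc.prems diff_upto_Suc_imp[OF Suc.prems(1)] diff_upto_Suc_imp[OF Suc.prems(2)]
      by (intro diff_upto_add[OF assms] Suc.IH) (auto simp: diff_upto_Suc simp del: iter_pd.simps)
    show "iter_pd [(b, i)] f q * g q + f q * iter_pd [(b, i)] g q = iter_pd [(b, i)] (\<lambda>q. f q * g q) q"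
      if "q \<in> U" for q
      using Suc.prems that diff_upto_Suc_imp_differentiable[OF assms]
      by (simp only: iter_pd_single dir_deriv_mult)
  qed
  moreover have "(\<lambda>q. f q * g q) differentiable_on U"
    using Suc.prems by (simp add: diff_upto_Suc)
  ultimately show ?case unfolding diff_upto_Suc split_paired_All by blast
qed

lemma diff_upto_inverse:
  assumes "open U" "\<And>q. q \<in> U \<Longrightarrow> f q \<noteq> 0"
  shows "diff_upto U k f \<Longrightarrow> diff_upto U k (\<lambda>q. 1 / f q)"
proof (induction k)
  case 0
  then show ?case
    using assms by (auto simp: diff_upto_0 differentiable_on_eq_differentiable_at)
next
  case (Suc k)
  have inv: "diff_upto U k (\<lambda>q. 1 / f q)" using Suc.IH diff_upto_Suc_imp[OF Suc.prems] .
  have "diff_upto U k (iter_pd [(b, i)] (\<lambda>q. 1 / f q))" for b i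
  proof (rule diff_upto_cong[OF assms(1)])
    show "diff_upto U k (\<lambda>q. - 1 * iter_pd [(b, i)] f q * (1 / f q) * (1 / f q))"
      using Suc.prems inv
      by (intro diff_upto_mult[OF assms(1)] diff_upto_const) (auto simp: diff_upto_Suc simp del: iter_pd.simps)
    show "- 1 * iter_pd [(b, i)] f q * (1 / f q) * (1 / f q) = iter_pd [(b, i)] (\<lambda>q. 1 / f q) q"
      if "q \<in> U" for q
      using dir_deriv_divide[OF differentiable_const
          diff_upto_Suc_imp_differentiable[OF assms(1) Suc.prems that] assms(2)[OF that]]
      by (simp add: iter_pd_single dir_deriv_const power2_eq_square del: iter_pd.simps)
  qed
  moreover have "(\<lambda>q. 1 / f q) differentiable_on U"
    unfolding differentiable_on_eq_differentiable_at[OF assms(1)]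
    using diff_upto_Suc_imp_differentiable[OF assms(1) Suc.prems] assms(2) by simp
  ultimately show ?case unfolding diff_upto_Suc split_paired_All by blast
qed

lemma smooth_on_const: "smooth_on U (\<lambda>q. c)"
  by (simp add: smooth_on_iff_diff_upto diff_upto_const)

lemma smooth_on_add: "open U \<Longrightarrow> smooth_on U f \<Longrightarrow> smooth_on U g \<Longrightarrow> smooth_on U (\<lambda>q. f q + g q)"
  by (simp add: smooth_on_iff_diff_upto diff_upto_add)

lemma smooth_on_mult: "open U \<Longrightarrow> smooth_on U f \<Longrightarrow> smooth_on U g \<Longrightarrow> smooth_on U (\<lambda>q. f q * g q)"
  by (simp add: smooth_on_iff_diff_upto diff_upto_mult)

lemma smooth_on_inverse:
  "open U \<Longrightarrow> (\<And>q. q \<in> U \<Longrightarrow> f q \<noteq> 0) \<Longrightarrow> smooth_on U f \<Longrightarrow> smooth_on U (\<lambda>q. 1 / f q)"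
  by (simp add: smooth_on_iff_diff_upto diff_upto_inverse)

lemma smooth_on_cong:
  "open U \<Longrightarrow> (\<And>q. q \<in> U \<Longrightarrow> f q = g q) \<Longrightarrow> smooth_on U f \<Longrightarrow> smooth_on U g"
  unfolding smooth_on_iff_diff_upto using diff_upto_cong by blast

lemma smooth_on_iter_pd: "smooth_on U f \<Longrightarrow> smooth_on U (iter_pd ops f)"
  by (simp add: smooth_on_def flip: iter_pd_append)

lemma smooth_on_dX: "smooth_on U f \<Longrightarrow> smooth_on U (dX i f)"
  using smooth_on_iter_pd[of U f "[(False, i)]"] by simp

lemma smooth_on_dY: "smooth_on U f \<Longrightarrow> smooth_on U (dY i f)"
  using smooth_on_iter_pd[of U f "[(True, i)]"] by simp

lemma smooth_on_imp_differentiable_on: "smooth_on U f \<Longrightarrow> f differentiable_on U"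
  using smooth_on_iter_pd[of U f "[]"] unfolding smooth_on_def by (metis iter_pd.simps(1))

lemma smooth_on_imp_differentiable: "open U \<Longrightarrow> smooth_on U f \<Longrightarrow> q \<in> U \<Longrightarrow> f differentiable (at q)"
  using smooth_on_imp_differentiable_on differentiable_on_eq_differentiable_at by blast

lemma smooth_on_cmult: "open U \<Longrightarrow> smooth_on U f \<Longrightarrow> smooth_on U (\<lambda>q. c * f q)"
  by (rule smooth_on_mult[OF _ smooth_on_const])

lemma smooth_on_diff: "open U \<Longrightarrow> smooth_on U f \<Longrightarrow> smooth_on U g \<Longrightarrow> smooth_on U (\<lambda>q. f q - g q)"
  using smooth_on_add[of U f "\<lambda>q. - 1 * g q"] smooth_on_cmult[of U g "- 1"] by simp

lemma smooth_on_divide: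
  "open U \<Longrightarrow> (\<And>q. q \<in> U \<Longrightarrow> g q \<noteq> 0) \<Longrightarrow> smooth_on U f \<Longrightarrow> smooth_on U g \<Longrightarrow>
   smooth_on U (\<lambda>q. f q / g q)"
  using smooth_on_mult[of U f "\<lambda>q. 1 / g q"] smooth_on_inverse[of U g] by simp

lemma smooth_on_sum_2:
  fixes f :: "2 \<Rightarrow> pt \<Rightarrow> real"
  shows "open U \<Longrightarrow> (\<And>i. smooth_on U (f i)) \<Longrightarrow> smooth_on U (\<lambda>q. \<Sum>i\<in>UNIV. f i q)"
  unfolding sum_2 by (rule smooth_on_add)

lemma smooth_on_subset: "V \<subseteq> U \<Longrightarrow> smooth_on U f \<Longrightarrow> smooth_on V f"
  unfolding smooth_on_def by (blast intro: differentiable_on_subset)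

lemma has_derivative_snd_nth: "((\<lambda>q::pt. snd q $ i) has_derivative (\<lambda>v. snd v $ i)) (at p)"
  by (rule bounded_linear_imp_has_derivative,
      rule bounded_linear_compose[OF bounded_linear_vec_nth bounded_linear_snd])

lemma differentiable_on_snd_nth: "(\<lambda>q::pt. snd q $ i) differentiable_on U"
  unfolding differentiable_on_def differentiable_def
  using has_derivative_snd_nth has_derivative_at_withinI by blast

lemma smooth_on_snd_nth: "smooth_on U (\<lambda>q::pt. snd q $ i)"
  unfolding smooth_on_iff_diff_upto
proof
  fix k
  show "diff_upto U k (\<lambda>q::pt. snd q $ i)"
  proof (cases k)
    case 0
    then show ?thesis using differentiable_on_snd_nth by (simp add: diff_upto_0)
  next
    case Suc
    have "iter_pd [op] (\<lambda>q::pt. snd q $ i) = (\<lambda>q. if fst op then axis (snd op) 1 $ i else 0)" for op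
      by (cases op) (auto simp: iter_pd_single dir_deriv_eq[OF has_derivative_snd_nth] simp del: iter_pd.simps)
    then show ?thesis
      using Suc differentiable_on_snd_nth by (auto simp: diff_upto_Suc diff_upto_const)
  qed
qed

section \<open>Positive homogeneity\<close>

lemma homogD: "homog U r f \<Longrightarrow> p \<in> U \<Longrightarrow> c > 0 \<Longrightarrow> f (fst p, c *\<^sub>R snd p) = c powr r * f p"
  unfolding homog_def by blast

lemma homogI:
  "(\<And>p c. p \<in> U \<Longrightarrow> (c::real) > 0 \<Longrightarrow> f (fst p, c *\<^sub>R snd p) = c powr r * f p) \<Longrightarrow> homog U r f"
  unfolding homog_def by blast

lemma homog_mult: "homog U r f \<Longrightarrow> homog U s g \<Longrightarrow> homog U (r + s) (\<lambda>q. f q * g q)"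
  by (rule homogI) (simp only: homogD powr_add mult_ac)

lemma homog_add: "homog U r f \<Longrightarrow> homog U r g \<Longrightarrow> homog U r (\<lambda>q. f q + g q)"
  by (rule homogI) (simp only: homogD distrib_left)

lemma homog_diff: "homog U r f \<Longrightarrow> homog U r g \<Longrightarrow> homog U r (\<lambda>q. f q - g q)"
  by (rule homogI) (simp only: homogD right_diff_distrib)

lemma homog_const: "homog U 0 (\<lambda>q. c)"
  by (rule homogI) simp

lemma homog_cmult: "homog U r f \<Longrightarrow> homog U r (\<lambda>q. c * f q)"
  by (rule homogI) (simp only: homogD mult_ac)

lemma homog_inverse: "homog U r f \<Longrightarrow> homog U (- r) (\<lambda>q. 1 / f q)"
  by (rule homogI) (simp add: homogD powr_minus_divide)

lemma homog_snd_nth: "homog U 1 (\<lambda>q. snd q $ i)"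
  by (rule homogI) simp

lemma homog_sum_2:
  fixes f :: "2 \<Rightarrow> pt \<Rightarrow> real"
  shows "(\<And>i. homog U r (f i)) \<Longrightarrow> homog U r (\<lambda>q. \<Sum>i\<in>UNIV. f i q)"
  unfolding sum_2 by (rule homog_add)

lemma homog_cong:
  assumes "homog U r f" "conic U" "\<And>q. q \<in> U \<Longrightarrow> f q = g q"
  shows "homog U r g"
proof (rule homogI)
  fix p c
  assume p: "p \<in> U" and c: "(c::real) > 0"
  have "(fst p, c *\<^sub>R snd p) \<in> U" using assms(2) p c unfolding conic_def by blast
  then show "g (fst p, c *\<^sub>R snd p) = c powr r * g p"
    using assms(3)[OF p] assms(3) homogD[OF assms(1) p c] by metis
qed

lemma homog_subset: "V \<subseteq> U \<Longrightarrow> homog U r f \<Longrightarrow> homog V r f"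
  unfolding homog_def by blast

lemma homog0_mult: "homog U 0 f \<Longrightarrow> homog U 0 g \<Longrightarrow> homog U 0 (\<lambda>q. f q * g q)"
  using homog_mult[of U 0 f 0 g] by simp

lemma homog0_inverse: "homog U 0 f \<Longrightarrow> homog U 0 (\<lambda>q. 1 / f q)"
  using homog_inverse[of U 0 f] by simp

lemma dir_deriv_homog:
  assumes U: "conic U" and f: "homog U r f" "f differentiable_on U"
    and q: "q \<in> U" and c: "c > 0"
  shows "dir_deriv (fst v, c *\<^sub>R snd v) f (fst q, c *\<^sub>R snd q) = c powr r * dir_deriv v f q"
proof -
  have oU: "open U" using U unfolding conic_def by blast
  define T where "T = (\<lambda>q'::pt. (fst q', c *\<^sub>R snd q'))"
  have TU: "T q \<in> U" using U q c unfolding conic_def T_def by blast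
  have T: "(T has_derivative T) (at q)" unfolding T_def by (auto intro!: derivative_eq_intros)
  have "((\<lambda>q'. f (T q')) has_derivative (\<lambda>v. dir_deriv (T v) f (T q))) (at q)"
    using has_derivative_compose[OF T has_derivative_dir_deriv] f(2) TU oU
    by (simp add: differentiable_on_eq_differentiable_at)
  then have "((\<lambda>q'. c powr r * f q') has_derivative (\<lambda>v. dir_deriv (T v) f (T q))) (at q)"
    by (rule has_derivative_transform_within_open[OF _ oU q]) (use f(1) c in \<open>auto simp: homog_def T_def\<close>)
  moreover have "((\<lambda>q'. c powr r * f q') has_derivative (\<lambda>v. c powr r * dir_deriv v f q)) (at q)"
    using has_derivative_mult_right[OF has_derivative_dir_deriv] f(2) q oU
    by (simp add: differentiable_on_eq_differentiable_at)
  ultimately have "(\<lambda>v. dir_deriv (T v) f (T q)) = (\<lambda>v. c powr r * dir_deriv v f q)"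
    by (rule has_derivative_unique)
  then show ?thesis unfolding T_def by metis
qed

lemma homog_dX:
  assumes "conic U" "homog U r f" "f differentiable_on U"
  shows "homog U r (dX i f)"
  using dir_deriv_homog[OF assms, of _ _ "(axis i 1, 0)"] by (intro homogI) (simp add: dX_eq_dir_deriv)

lemma homog_dY:
  assumes U: "conic U" and f: "homog U r f" "f differentiable_on U"
  shows "homog U (r - 1) (dY i f)"
proof (rule homogI)
  fix q c
  assume q: "q \<in> U" and c: "(c::real) > 0"
  have "f differentiable (at (fst q, c *\<^sub>R snd q))"
    using f(2) U q c unfolding conic_def by (auto simp: differentiable_on_eq_differentiable_at)
  then have "c * dY i f (fst q, c *\<^sub>R snd q) = c powr r * dY i f q"
    using dir_deriv_homog[OF U f q c, of "(0, axis i 1)"] dir_deriv_scaleR_vector[of f _ c "(0, axis i 1)"]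
    by (simp add: dY_eq_dir_deriv)
  then show "dY i f (fst q, c *\<^sub>R snd q) = c powr (r - 1) * dY i f q"
    using c by (simp add: powr_diff field_simps)
qed

lemma vd1_eq_dir_deriv:
  assumes "f differentiable (at q)"
  shows "vd1 f q = dir_deriv (0, snd q) f q"
proof -
  have "((\<chi> i. 0, \<chi> i. snd q $ i)::pt) = (0, snd q)" by (simp add: vec_eq_iff)
  then show ?thesis
    using dir_deriv_eq_sum_partials[OF assms, of "\<lambda>i. 0" "\<lambda>i. snd q $ i"] by (simp add: vd1_def)
qed

theorem euler_homogeneous:
  assumes U: "conic U" and f: "homog U r f" and q: "q \<in> U" and fd: "f differentiable (at q)"
  shows "vd1 f q = r * f q"
proof -
  define H where "H = (\<lambda>t::real. ((fst q, t *\<^sub>R snd q)::pt))"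
  have H1: "H 1 = q" unfolding H_def by simp
  have H: "(H has_derivative (\<lambda>t. (0, t *\<^sub>R snd q))) (at 1)"
    unfolding H_def by (auto intro!: derivative_eq_intros)
  have fH: "((\<lambda>t. f (H t)) has_derivative (\<lambda>t. dir_deriv (0, t *\<^sub>R snd q) f q)) (at 1)"
    using has_derivative_compose[OF H has_derivative_dir_deriv[OF fd[folded H1]]] unfolding H1 .
  have "((\<lambda>t. t powr r * f q) has_derivative (\<lambda>t. dir_deriv (0, t *\<^sub>R snd q) f q)) (at 1)"
    by (rule has_derivative_transform_within_open[OF fH, of "{0<..}"])
       (use f q in \<open>auto simp: homog_def H_def\<close>)
  moreover have "((\<lambda>t. t powr r * f q) has_derivative (\<lambda>t. t * (r * f q))) (at 1)"
    using has_derivative_mult_left[OF has_field_derivative_imp_has_derivative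
        [OF has_real_derivative_powr[of 1 r]], of "f q"]
    by (simp add: mult_ac)
  ultimately have "(\<lambda>t. dir_deriv (0, t *\<^sub>R snd q) f q) = (\<lambda>t. t * (r * f q))"
    by (rule has_derivative_unique)
  then have "dir_deriv (0, 1 *\<^sub>R snd q) f q = 1 * (r * f q)" by (rule fun_cong)
  then show ?thesis using vd1_eq_dir_deriv[OF fd] by simp
qed

lemma matrix_inv_2:
  fixes M :: "real^2^2"
  assumes "det M \<noteq> 0"
  shows "matrix_inv M $ i $ j =
    (if i = j then M $ (if i = 1 then 2 else 1) $ (if i = 1 then 2 else 1) else - M $ i $ j) / det M"
proof -
  define N :: "real^2^2" where
    "N = (\<chi> i j. (if i = j then M $ (if i = 1 then 2 else 1) $ (if i = 1 then 2 else 1) else - M $ i $ j) / det M)"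
  have "M$1$1 * M$2$2 - M$1$2 * M$2$1 \<noteq> 0" using assms by (simp add: det_2)
  then have MN: "M ** N = mat 1" "N ** M = mat 1"
    unfolding N_def
    by (simp_all add: matrix_matrix_mult_def mat_def vec_eq_iff forall_2 sum_2 det_2 divide_simps)
  then have "M ** matrix_inv M = mat 1 \<and> matrix_inv M ** M = mat 1"
    unfolding matrix_inv_def by (intro someI_ex[of "\<lambda>N. M ** N = mat 1 \<and> N ** M = mat 1"]) blast
  then have "matrix_inv M = N"
    by (metis MN(1) matrix_mul_assoc matrix_mul_lid matrix_mul_rid)
  then show ?thesis unfolding N_def by simp
qed

lemma continuous_square_one_imp_const:
  fixes s :: "real \<Rightarrow> real"
  assumes cont: "continuous_on {0<..} s" and sq: "\<And>t. t > 0 \<Longrightarrow> s t * s t = 1"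
    and one: "s 1 = 1" and c: "c > 0"
  shows "s c = 1"
proof (rule ccontr)
  assume "s c \<noteq> 1"
  then have minus: "s c = - 1" using sq[OF c] by (metis mult_cancel_right1 square_eq_1_iff)
  have cont': "continuous_on {a..b} s" if "a > 0" for a b
    by (rule continuous_on_subset[OF cont]) (use that in auto)
  obtain x where x: "min c 1 \<le> x" "x \<le> max c 1" "s x = 0"
  proof (cases "c \<le> 1")
    case True
    then show ?thesis using IVT'[of s c 0 1] minus one cont'[of c 1] c that by auto
  next
    case False
    then show ?thesis using IVT2'[of s c 0 1] minus one cont'[of 1 c] that by auto
  qed
  then have "x > 0" using c by linarith
  then show False using sq[of x] x by simp
qed

lemma spray_with_eq_dir_deriv:
  assumes "g differentiable (at q)"
  shows "spray_with G g q = dir_deriv (snd q, \<chi> i. - 2 * G i q) g q"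
proof -
  have "((snd q, \<chi> i. - 2 * G i q)::pt) = (\<chi> i. snd q $ i, \<chi> i. - 2 * G i q)" by (simp add: vec_eq_iff)
  then show ?thesis
    using dir_deriv_eq_sum_partials[OF assms, of "\<lambda>i. snd q $ i" "\<lambda>i. - 2 * G i q"]
    by (simp add: spray_with_def sum_2 algebra_simps)
qed

lemma vd2_eq_dir_deriv:
  assumes "g differentiable (at q)"
  shows "vd2 F eps m g q = dir_deriv (0, \<chi> i. eps * F q * m_up F m i q) g q"
proof -
  have "((0, \<chi> i. eps * F q * m_up F m i q)::pt) = (\<chi> i. 0, \<chi> i. eps * F q * m_up F m i q)"
    by (simp add: vec_eq_iff)
  then show ?thesis
    using dir_deriv_eq_sum_partials[OF assms, of "\<lambda>i. 0" "\<lambda>i. eps * F q * m_up F m i q"]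
    by (simp add: vd2_def sum_2 algebra_simps)
qed

locale conformal_change =
  fixes A :: "pt set" and F phi I :: "pt \<Rightarrow> real" and eps :: real and m :: "2 \<Rightarrow> pt \<Rightarrow> real"
  assumes finsler: "conic_pseudo_finsler A F"
    and frame: "berwald_frame A F eps m"
    and scalar: "main_scalar A F m I"
    and admissible: "admissible_phi A F eps m phi"
    and rho_sign: "\<forall>p\<in>A. eps * rhoC F eps m I phi p > 0"
begin

abbreviation "F2 \<equiv> \<lambda>q. (F q)\<^sup>2"
abbreviation "d2 \<equiv> vd2 F eps m"
abbreviation "rho \<equiv> rhoC F eps m I phi"

lemma conic_A: "conic A" using finsler unfolding conic_pseudo_finsler_def by blast
lemma open_A: "open A" using conic_A unfolding conic_def by blast
lemma smooth_F: "smooth_on A F" using finsler unfolding conic_pseudo_finsler_def by blast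
lemma homog_F: "homog A 1 F" using finsler unfolding conic_pseudo_finsler_def by blast
lemma F_nonzero: "q \<in> A \<Longrightarrow> F q \<noteq> 0" using finsler unfolding conic_pseudo_finsler_def by blast
lemma det_gmat_nonzero: "q \<in> A \<Longrightarrow> det (gmat F q) \<noteq> 0"
  using finsler unfolding conic_pseudo_finsler_def by blast
lemma eps_cases: "eps = 1 \<or> eps = -1" using frame unfolding berwald_frame_def by blast
lemma smooth_m: "smooth_on A (m i)" using frame unfolding berwald_frame_def by blast
lemma gmet_frame: "q \<in> A \<Longrightarrow> gmet F i j q = dY i F q * dY j F q + eps * m i q * m j q"
  using frame unfolding berwald_frame_def by blast
lemma smooth_phi: "smooth_on A phi" using admissible unfolding admissible_phi_def by blast
lemma homog_phi: "homog A 0 phi" using admissible unfolding admissible_phi_def by blast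

lemma homog_dX_A: "homog A r f \<Longrightarrow> smooth_on A f \<Longrightarrow> homog A r (dX i f)"
  using homog_dX[OF conic_A] smooth_on_imp_differentiable_on by blast

lemma homog_dY_A: "homog A r f \<Longrightarrow> smooth_on A f \<Longrightarrow> homog A (r - 1) (dY i f)"
  using homog_dY[OF conic_A] smooth_on_imp_differentiable_on by blast

lemma smooth_F2: "smooth_on A F2"
  unfolding power2_eq_square by (rule smooth_on_mult[OF open_A smooth_F smooth_F])

lemma homog_F2: "homog A 2 F2"
  using homog_mult[OF homog_F homog_F] by (simp add: power2_eq_square)

lemma gmet_eq: "gmet F i j = (\<lambda>q. 1/2 * dY i (dY j F2) q)"
  by (simp add: gmet_def fun_eq_iff)

lemma smooth_gmet: "smooth_on A (gmet F i j)"
  unfolding gmet_eq by (intro smooth_on_cmult[OF open_A] smooth_on_dY smooth_F2)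

lemma homog_gmet: "homog A 0 (gmet F i j)"
proof -
  have "homog A (2 - 1 - 1) (dY i (dY j F2))"
    by (intro homog_dY_A smooth_on_dY smooth_F2 homog_F2)
  then show ?thesis unfolding gmet_eq by (intro homog_cmult) simp
qed

lemma det_gmat_eq: "det (gmat F q) = gmet F 1 1 q * gmet F 2 2 q - gmet F 1 2 q * gmet F 2 1 q"
  by (simp add: gmat_def det_2)

lemma ginv_eq:
  assumes "q \<in> A"
  shows "ginv F i j q =
    (if i = j then gmet F (if i = 1 then 2 else 1) (if i = 1 then 2 else 1) q else - gmet F i j q)
      / det (gmat F q)"
  unfolding ginv_def matrix_inv_2[OF det_gmat_nonzero[OF assms]] by (simp add: gmat_def)

lemma smooth_ginv: "smooth_on A (ginv F i j)"
proof -
  have det: "smooth_on A (\<lambda>q. det (gmat F q))"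
    unfolding det_gmat_eq by (intro smooth_on_diff[OF open_A] smooth_on_mult[OF open_A] smooth_gmet)
  show ?thesis
  proof (cases "i = j")
    case True
    have "smooth_on A (\<lambda>q. gmet F (if i = 1 then 2 else 1) (if i = 1 then 2 else 1) q / det (gmat F q))"
      by (intro smooth_on_divide[OF open_A det_gmat_nonzero] smooth_gmet det)
    then show ?thesis by (rule smooth_on_cong[OF open_A, rotated]) (simp add: ginv_eq True)
  next
    case False
    have "smooth_on A (\<lambda>q. - 1 * gmet F i j q / det (gmat F q))"
      by (intro smooth_on_divide[OF open_A det_gmat_nonzero] smooth_on_cmult[OF open_A] smooth_gmet det)
    then show ?thesis by (rule smooth_on_cong[OF open_A, rotated]) (simp add: ginv_eq False)
  qed
qed

lemma homog_ginv: "homog A 0 (ginv F i j)"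
proof (rule homogI)
  fix q c
  assume q: "q \<in> A" and c: "(c::real) > 0"
  have "gmat F (fst q, c *\<^sub>R snd q) = gmat F q"
    unfolding gmat_def using homogD[OF homog_gmet q c] c by (simp add: vec_eq_iff)
  then show "ginv F i j (fst q, c *\<^sub>R snd q) = c powr 0 * ginv F i j q"
    using c by (simp add: ginv_def)
qed

lemma frame_nonvanishing: assumes "q \<in> A" shows "\<exists>k. m k q \<noteq> 0"
proof (rule ccontr)
  assume "\<not> ?thesis"
  then have "det (gmat F q) = 0" using gmet_frame[OF assms] by (simp add: det_gmat_eq)
  then show False using det_gmat_nonzero[OF assms] by simp
qed

lemma continuous_on_m: "continuous_on A (m i)"
  using smooth_on_imp_differentiable_on[OF smooth_m] differentiable_imp_continuous_on by blast

lemma homog_frame_products: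
  assumes q: "q \<in> A" and c: "c > 0"
  shows "m i (fst q, c *\<^sub>R snd q) * m j (fst q, c *\<^sub>R snd q) = m i q * m j q"
proof -
  let ?x = "(fst q, c *\<^sub>R snd q)"
  have x: "?x \<in> A" using conic_A q c unfolding conic_def by blast
  have dF: "dY l F ?x = dY l F q" for l
    using homogD[OF homog_dY_A[OF homog_F smooth_F] q c] c by simp
  have "eps * m i ?x * m j ?x = gmet F i j ?x - dY i F ?x * dY j F ?x"
    using gmet_frame[OF x] by simp
  also have "\<dots> = gmet F i j q - dY i F q * dY j F q"
    using homogD[OF homog_gmet q c] c dF by simp
  also have "\<dots> = eps * m i q * m j q"
    using gmet_frame[OF q] by simp
  finally show ?thesis using eps_cases by auto
qed

text \<open>The frame equation only fixes the products \<open>m\<^sub>i m\<^sub>j\<close>, hence \<open>m\<close> up to sign along each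
  ray; continuity along the ray excludes a sign change.\<close>

lemma homog_m: "homog A 0 (m j)"
proof (rule homogI)
  fix q c
  assume q: "q \<in> A" and c: "(c::real) > 0"
  obtain k where k: "m k q \<noteq> 0" using frame_nonvanishing[OF q] by blast
  define ray where "ray = (\<lambda>t::real. ((fst q, t *\<^sub>R snd q)::pt))"
  have ray_A: "ray ` {0<..} \<subseteq> A" using conic_A q unfolding conic_def ray_def by auto
  have "continuous_on {0<..} ray" unfolding ray_def by (intro continuous_intros)
  then have "continuous_on {0<..} (\<lambda>t. m k (ray t))"
    by (rule continuous_on_compose2[OF continuous_on_m _ ray_A])
  then have cont: "continuous_on {0<..} (\<lambda>t. m k (ray t) / m k q)"
    by (rule continuous_on_divide[OF _ continuous_on_const]) (use k in simp)
  have "m k (ray t) / m k q * (m k (ray t) / m k q) = 1" if "t > 0" for t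
    using homog_frame_products[OF q that, of k k] k by (simp add: ray_def field_simps)
  from continuous_square_one_imp_const[OF cont this _ c]
  have "m k (ray c) = m k q" using k by (simp add: ray_def)
  then show "m j (fst q, c *\<^sub>R snd q) = c powr 0 * m j q"
    using homog_frame_products[OF q c, of j k] k c by (simp add: ray_def)
qed

lemma m_up_eq: "m_up F m i = (\<lambda>q. \<Sum>j\<in>UNIV. ginv F i j q * m j q)"
  by (simp add: m_up_def fun_eq_iff)

lemma smooth_m_up: "smooth_on A (m_up F m i)"
  unfolding m_up_eq
  by (intro smooth_on_sum_2[OF open_A] smooth_on_mult[OF open_A] smooth_ginv smooth_m)

lemma homog_m_up: "homog A 0 (m_up F m i)"
  unfolding m_up_eq using homog_mult[OF homog_ginv homog_m] by (intro homog_sum_2) simp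

lemma sprayG_eq: "sprayG F i = (\<lambda>q. 1/4 * (\<Sum>l\<in>UNIV. ginv F i l q *
      ((\<Sum>k\<in>UNIV. snd q $ k * dX k (dY l F2) q) - dX l F2 q)))"
  by (simp add: sprayG_def fun_eq_iff)

lemma smooth_sprayG: "smooth_on A (sprayG F i)"
  unfolding sprayG_eq
  by (intro smooth_on_cmult[OF open_A] smooth_on_sum_2[OF open_A] smooth_on_mult[OF open_A]
      smooth_on_diff[OF open_A] smooth_ginv smooth_on_snd_nth smooth_on_dX smooth_on_dY smooth_F2)

lemma homog_sprayG: "homog A 2 (sprayG F i)"
proof -
  have "homog A 1 (dX k (dY l F2))" for k l
    using homog_dX_A[OF homog_dY_A[OF homog_F2 smooth_F2] smooth_on_dY[OF smooth_F2]] by simp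
  then have "homog A (1 + 1) (\<lambda>q. snd q $ k * dX k (dY l F2) q)" for k l
    by (intro homog_mult homog_snd_nth)
  then have "homog A 2 (\<lambda>q. (\<Sum>k\<in>UNIV. snd q $ k * dX k (dY l F2) q) - dX l F2 q)" for l
    by (intro homog_diff homog_sum_2 homog_dX_A homog_F2 smooth_F2) simp
  then have "homog A (0 + 2) (\<lambda>q. ginv F i l q * ((\<Sum>k\<in>UNIV. snd q $ k * dX k (dY l F2) q) - dX l F2 q))" for l
    by (intro homog_mult homog_ginv)
  then show ?thesis unfolding sprayG_eq by (intro homog_cmult homog_sum_2) simp
qed

text \<open>Euler's theorem for the \<open>h(2)\<close> functions \<open>G\<^sup>j\<close> turns \<open>y\<^sup>i G\<^sup>j\<^sub>i\<close> into \<open>2G\<^sup>j\<close>.\<close>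

lemma spray_op_eq_hd1:
  assumes q: "q \<in> A"
  shows "spray_op F g q = F q * hd1 F g q"
proof -
  have euler: "sprayG F j q = (snd q $ 1 * dY 1 (sprayG F j) q + snd q $ 2 * dY 2 (sprayG F j) q) / 2" for j
    using euler_homogeneous[OF conic_A homog_sprayG q smooth_on_imp_differentiable[OF open_A smooth_sprayG q]]
    by (simp add: vd1_def sum_2)
  show ?thesis
    unfolding hd1_def hdelta_def Gij_def ell_up_def spray_op_def spray_with_def sum_2 euler
    using F_nonzero[OF q] by (simp add: field_simps)
qed

lemma spray_with_GbarC:
  assumes q: "q \<in> A"
  shows "F q * spray_with (GbarC F eps m I phi) f q = F q * spray_op F f q
    - 2 * eps * QC F eps m I phi q * d2 f q - 2 * PC F eps m I phi q * vd1 f q"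
  unfolding spray_with_def spray_op_def GbarC_def vd2_def vd1_def ell_up_def sum_2
  using eps_cases F_nonzero[OF q] by (elim disjE) (simp_all add: field_simps)

lemma vd2_eq: "d2 f = (\<lambda>q. eps * F q * (\<Sum>i\<in>UNIV. m_up F m i q * dY i f q))"
  by (simp add: vd2_def fun_eq_iff)

lemma smooth_vd2:
  assumes "open V" "V \<subseteq> A" "smooth_on V f"
  shows "smooth_on V (d2 f)"
  unfolding vd2_eq
  by (intro smooth_on_mult[OF assms(1)] smooth_on_cmult[OF assms(1)] smooth_on_sum_2[OF assms(1)]
      smooth_on_dY assms(3) smooth_on_subset[OF assms(2) smooth_F] smooth_on_subset[OF assms(2) smooth_m_up])

lemma homog_vd2:
  assumes V: "conic V" "V \<subseteq> A" and f: "homog V r f" "smooth_on V f"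
  shows "homog V r (d2 f)"
proof -
  have "homog V (0 + (r - 1)) (\<lambda>q. m_up F m i q * dY i f q)" for i
    using homog_dY[OF V(1) f(1) smooth_on_imp_differentiable_on[OF f(2)]]
    by (intro homog_mult homog_subset[OF V(2) homog_m_up])
  then have "homog V (1 + (r - 1)) (\<lambda>q. F q * (\<Sum>i\<in>UNIV. m_up F m i q * dY i f q))"
    by (intro homog_mult homog_subset[OF V(2) homog_F] homog_sum_2) simp
  then show ?thesis unfolding vd2_eq by (simp add: homog_cmult mult.assoc)
qed

end

text \<open>The values at a point: \<open>r = \<rho>\<close>, \<open>s = sqrt(\<epsilon>\<rho>)\<close>, \<open>i = I\<close>, \<open>a = \<phi>;2\<close>, \<open>b = \<rho>;2\<close>,
  and the derivatives \<open>Sx\<close>, \<open>Mx\<close> of these along the spray and along \<open>\<epsilon> F m\<^sup>i \<partial>/\<partial>y\<^sup>i\<close>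
  (so \<open>Mr = b\<close>).\<close>

lemma landsberg_identity:
  fixes e s r F Q i a b Sr Si Sa Sb Mi Ma Mb :: real
  assumes e: "e = 1 \<or> e = -1" and s: "s > 0" "s\<^sup>2 = e * r" and r: "r \<noteq> 0" and F: "F \<noteq> 0"
  defines "K \<equiv> i + 2 * e * a - e / 2 * (b / r)"
  shows "F * (e * Sr / (2 * s) * K + s * (Si + 2 * e * Sa - e / 2 * ((Sb * r - b * Sr) / r\<^sup>2)))
      - 2 * e * Q * (e * b / (2 * s) * K + s * (Mi + 2 * e * Ma - e / 2 * ((Mb * r - b * b) / r\<^sup>2)))
    = F * s * Si + s / (2 * r) *
      ((F\<^sup>2 * (Sr / F) - 2 * e * Q * b) * (i + 2 * e * a + e * b / (2 * r))
       + F\<^sup>2 * (4 * e * r * (Sa / F) - e * (Sb / F)) - 2 * Q * (2 * e * r * Mi + 4 * r * Ma - Mb))"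
proof -
  have "e / s = s / r" using s r e by (auto simp: field_simps power2_eq_square)
  then have "e * x / (2 * s) = x * s / (2 * r)" for x
    by (metis times_divide_eq_right mult.commute divide_divide_eq_left)
  then show ?thesis
    unfolding K_def using e r F
    by (elim disjE; simp; simp add: field_simps power2_eq_square; simp add: algebra_simps)
qed

section \<open>The chart where a frame component does not vanish\<close>

text \<open>The main scalar is only known through \<open>F C\<^sub>k\<^sub>k\<^sub>k = I m\<^sub>k\<^sup>3\<close>, so its smoothness and
  homogeneity are established where \<open>m\<^sub>k \<noteq> 0\<close>; by \<open>frame_nonvanishing\<close> such a \<open>k\<close> exists
  at every point.\<close>

locale conformal_change_chart = conformal_change +
  fixes k :: 2 and p :: pt
  assumes p_in_A: "p \<in> A" and m_k_p: "m k p \<noteq> 0"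
begin

definition U where "U = {q \<in> A. m k q \<noteq> 0}"

lemma U_subset: "U \<subseteq> A" unfolding U_def by blast
lemma p_in_U: "p \<in> U" unfolding U_def using p_in_A m_k_p by blast
lemma m_k_nonzero: "q \<in> U \<Longrightarrow> m k q \<noteq> 0" unfolding U_def by blast

lemma open_U: "open U"
proof -
  have "open (m k -` (- {0}) \<inter> A)"
    using continuous_on_open_vimage[OF open_A, THEN iffD1, OF continuous_on_m] by blast
  moreover have "m k -` (- {0}) \<inter> A = U" unfolding U_def by auto
  ultimately show ?thesis by simp
qed

lemma conic_U: "conic U"
  unfolding conic_def
proof (intro conjI ballI allI impI)
  show "open U" by (rule open_U)
  fix q
  assume q: "q \<in> U"
  then show "snd q \<noteq> 0" using conic_A U_subset unfolding conic_def by blast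
  fix c :: real
  assume c: "c > 0"
  have "(fst q, c *\<^sub>R snd q) \<in> A" using conic_A U_subset q c unfolding conic_def by blast
  moreover have "m k (fst q, c *\<^sub>R snd q) = m k q" using homogD[OF homog_m, of q c] q c U_subset by auto
  ultimately show "(fst q, c *\<^sub>R snd q) \<in> U" using q unfolding U_def by auto
qed

lemma smooth_U: "smooth_on A f \<Longrightarrow> smooth_on U f" by (rule smooth_on_subset[OF U_subset])
lemma homog_U: "homog A r f \<Longrightarrow> homog U r f" by (rule homog_subset[OF U_subset])

lemma cartan_eq: "cartan F k k k = (\<lambda>q. 1/4 * dY k (dY k (dY k F2)) q)"
  by (simp add: cartan_def fun_eq_iff)

lemma I_eq:
  assumes q: "q \<in> U"
  shows "I q = F q * cartan F k k k q / (m k q * m k q * m k q)"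
proof -
  have "F q * cartan F k k k q = I q * m k q * m k q * m k q"
    using scalar q U_subset unfolding main_scalar_def by blast
  then show ?thesis using m_k_nonzero[OF q] by (simp add: field_simps)
qed

lemma smooth_I: "smooth_on U I"
proof -
  have "smooth_on A (cartan F k k k)"
    unfolding cartan_eq by (intro smooth_on_cmult[OF open_A] smooth_on_dY smooth_F2)
  then have "smooth_on U (\<lambda>q. F q * cartan F k k k q)"
    by (intro smooth_on_mult[OF open_U] smooth_U smooth_F)
  moreover have "smooth_on U (\<lambda>q. m k q * m k q * m k q)"
    by (intro smooth_on_mult[OF open_U] smooth_U smooth_m)
  ultimately have "smooth_on U (\<lambda>q. F q * cartan F k k k q / (m k q * m k q * m k q))"
    by (rule smooth_on_divide[OF open_U, rotated]) (simp add: m_k_nonzero)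
  then show ?thesis by (rule smooth_on_cong[OF open_U, rotated]) (simp add: I_eq)
qed

lemma homog_I: "homog U 0 I"
proof -
  have "homog A (2 - 1 - 1 - 1) (dY k (dY k (dY k F2)))"
    by (intro homog_dY_A smooth_on_dY smooth_F2 homog_F2)
  then have "homog U (1 + - 1) (\<lambda>q. F q * cartan F k k k q)"
    unfolding cartan_eq by (intro homog_mult homog_cmult homog_U homog_F) simp
  then have FC: "homog U 0 (\<lambda>q. F q * cartan F k k k q)" by simp
  have "homog U 0 (\<lambda>q. m k q * m k q * m k q)" by (intro homog0_mult homog_U homog_m)
  then have "homog U 0 (\<lambda>q. F q * cartan F k k k q * (1 / (m k q * m k q * m k q)))"
    by (rule homog0_mult[OF FC homog0_inverse])
  then show ?thesis by (rule homog_cong[OF _ conic_U]) (simp add: I_eq)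
qed

lemma smooth_homog_vd2:
  "smooth_on U f \<Longrightarrow> homog U 0 f \<Longrightarrow> smooth_on U (d2 f) \<and> homog U 0 (d2 f)"
  using smooth_vd2[OF open_U U_subset] homog_vd2[OF conic_U U_subset] by blast

lemma smooth_homog_vd2_phi: "smooth_on U (d2 phi) \<and> homog U 0 (d2 phi)"
  using smooth_homog_vd2 smooth_U[OF smooth_phi] homog_U[OF homog_phi] by blast

lemma smooth_homog_vd2_vd2_phi: "smooth_on U (d2 (d2 phi)) \<and> homog U 0 (d2 (d2 phi))"
  using smooth_homog_vd2 smooth_homog_vd2_phi by blast

lemma rho_eq:
  "rho = (\<lambda>q. 1 / (d2 (d2 phi) q + eps * I q * d2 phi q + d2 phi q * d2 phi q + eps))"
  by (simp add: rhoC_def sigmaC_def fun_eq_iff power2_eq_square)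

lemma rho_nonzero: "q \<in> A \<Longrightarrow> rho q \<noteq> 0" using rho_sign by force

lemma smooth_rho: "smooth_on U rho"
  unfolding rho_eq using smooth_homog_vd2_phi smooth_homog_vd2_vd2_phi rho_nonzero U_subset
  by (intro smooth_on_inverse[OF open_U] smooth_on_add[OF open_U] smooth_on_mult[OF open_U]
      smooth_on_const smooth_I) (auto simp: rho_eq)

lemma homog_rho: "homog U 0 rho"
  unfolding rho_eq using smooth_homog_vd2_phi smooth_homog_vd2_vd2_phi
  by (intro homog0_inverse homog_add homog0_mult homog_cmult homog_const homog_I) auto

lemma smooth_homog_vd2_rho: "smooth_on U (d2 rho) \<and> homog U 0 (d2 rho)"
  using smooth_homog_vd2 smooth_rho homog_rho by blast

lemma differentiable_at_p:
  "rho differentiable (at p)" "I differentiable (at p)" "d2 phi differentiable (at p)"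
  "d2 rho differentiable (at p)"
  using smooth_rho smooth_I smooth_homog_vd2_phi smooth_homog_vd2_rho
  by (auto intro: smooth_on_imp_differentiable[OF open_U _ p_in_U])

lemma vd1_vanishes_at_p:
  "dir_deriv (0, snd p) rho p = 0" "dir_deriv (0, snd p) I p = 0"
  "dir_deriv (0, snd p) (d2 phi) p = 0" "dir_deriv (0, snd p) (d2 rho) p = 0"
  using euler_homogeneous[OF conic_U _ p_in_U] differentiable_at_p homog_rho homog_I
    smooth_homog_vd2_phi smooth_homog_vd2_rho
  by (auto simp flip: vd1_eq_dir_deriv)

definition Ibar_core :: "pt \<Rightarrow> real" where
  "Ibar_core = (\<lambda>q. I q + 2 * eps * d2 phi q - eps / 2 * (d2 rho q / rho q))"

lemma vd2_ln_abs_rho: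
  assumes q: "q \<in> U"
  shows "d2 (\<lambda>q. ln \<bar>rho q\<bar>) q = d2 rho q / rho q"
proof -
  have "rho q \<noteq> 0" using rho_nonzero q U_subset by blast
  then have "dY i (\<lambda>q. ln \<bar>rho q\<bar>) q = 1 / rho q * dY i rho q" for i
    unfolding dY_eq_dir_deriv
    by (rule dir_deriv_compose[OF smooth_on_imp_differentiable[OF open_U smooth_rho q]
          has_real_derivative_ln_abs])
  then show ?thesis unfolding vd2_def sum_2 by (simp add: algebra_simps add_divide_distrib)
qed

lemma IbarC_eq: "q \<in> U \<Longrightarrow> IbarC F eps m I phi q = sqrt (eps * rho q) * Ibar_core q"
  by (simp add: IbarC_def Ibar_core_def vd2_ln_abs_rho)

lemma eps_rho_p_pos: "eps * rho p > 0" using rho_sign p_in_A by blast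

lemma dir_deriv_IbarC:
  "dir_deriv v (IbarC F eps m I phi) p =
     eps * dir_deriv v rho p / (2 * sqrt (eps * rho p)) * Ibar_core p
     + sqrt (eps * rho p) * (dir_deriv v I p + 2 * eps * dir_deriv v (d2 phi) p
        - eps / 2 * ((dir_deriv v (d2 rho) p * rho p - d2 rho p * dir_deriv v rho p) / (rho p)\<^sup>2))"
    (is "_ = _ + sqrt (eps * rho p) * ?core")
  and differentiable_IbarC: "IbarC F eps m I phi differentiable (at p)"
proof -
  note d = differentiable_at_p
  have rho_p_nonzero: "rho p \<noteq> 0" using eps_rho_p_pos by auto
  have eps_rho: "(\<lambda>q. eps * rho q) differentiable (at p)" using d by simp
  have sqrt: "dir_deriv v (\<lambda>q. sqrt (eps * rho q)) p = eps * dir_deriv v rho p / (2 * sqrt (eps * rho p))"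
    using dir_deriv_compose[OF eps_rho DERIV_real_sqrt[OF eps_rho_p_pos]] dir_deriv_cmult[OF d(1)]
    by (simp add: field_simps)
  have core: "dir_deriv v Ibar_core p = ?core"
    unfolding Ibar_core_def using d rho_p_nonzero
    by (simp add: dir_deriv_diff dir_deriv_add dir_deriv_cmult dir_deriv_divide) (simp add: field_simps)
  have sqrt_diff: "(\<lambda>q. sqrt (eps * rho q)) differentiable (at p)"
    by (rule differentiable_compose_real[OF eps_rho DERIV_real_sqrt[OF eps_rho_p_pos]])
  have core_diff: "Ibar_core differentiable (at p)"
    unfolding Ibar_core_def using d rho_p_nonzero by simp
  have eq: "\<And>q. q \<in> U \<Longrightarrow> sqrt (eps * rho q) * Ibar_core q = IbarC F eps m I phi q"
    by (simp add: IbarC_eq)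
  show "IbarC F eps m I phi differentiable (at p)"
    by (rule differentiable_cong_open[OF open_U p_in_U eq differentiable_mult[OF sqrt_diff core_diff]])
  have "dir_deriv v (IbarC F eps m I phi) p = dir_deriv v (\<lambda>q. sqrt (eps * rho q) * Ibar_core q) p"
    using dir_deriv_cong_open[OF open_U p_in_U eq] by simp
  also have "\<dots> = eps * dir_deriv v rho p / (2 * sqrt (eps * rho p)) * Ibar_core p
      + sqrt (eps * rho p) * dir_deriv v Ibar_core p"
    by (simp add: dir_deriv_mult[OF sqrt_diff core_diff] sqrt)
  finally show "dir_deriv v (IbarC F eps m I phi) p =
      eps * dir_deriv v rho p / (2 * sqrt (eps * rho p)) * Ibar_core p + sqrt (eps * rho p) * ?core"
    by (simp only: core)
qed

lemma vd1_IbarC: "vd1 (IbarC F eps m I phi) p = 0"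
  by (simp add: vd1_eq_dir_deriv[OF differentiable_IbarC] dir_deriv_IbarC vd1_vanishes_at_p)

lemma landsberg_scalar_at_p:
  "F p * spray_with (GbarC F eps m I phi) (IbarC F eps m I phi) p =
     F p * sqrt (eps * rho p) * spray_op F I p
     + sqrt (eps * rho p) / (2 * rho p) *
       ( ((F p)\<^sup>2 * hd1 F rho p - 2 * eps * QC F eps m I phi p * d2 rho p)
           * (I p + 2 * eps * d2 phi p + eps * d2 rho p / (2 * rho p))
         + (F p)\<^sup>2 * (4 * eps * rho p * hd1 F (d2 phi) p - eps * hd1 F (d2 rho) p)
         - 2 * QC F eps m I phi p * (2 * eps * rho p * d2 I p + 4 * rho p * d2 (d2 phi) p - d2 (d2 rho) p))"
proof -
  define S where "S = ((snd p, \<chi> i. - 2 * sprayG F i p) :: pt)"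
  define M where "M = ((0, \<chi> i. eps * F p * m_up F m i p) :: pt)"
  have S: "spray_op F g p = dir_deriv S g p" "hd1 F g p = dir_deriv S g p / F p"
    if "g differentiable (at p)" for g
    using spray_with_eq_dir_deriv[OF that] spray_op_eq_hd1[OF p_in_A, of g] F_nonzero[OF p_in_A]
    by (simp_all add: S_def spray_op_def)
  have M: "d2 g p = dir_deriv M g p" if "g differentiable (at p)" for g
    using vd2_eq_dir_deriv[OF that] by (simp add: M_def)
  have "F p * spray_with (GbarC F eps m I phi) (IbarC F eps m I phi) p
      = F p * dir_deriv S (IbarC F eps m I phi) p
        - 2 * eps * QC F eps m I phi p * dir_deriv M (IbarC F eps m I phi) p"
    using spray_with_GbarC[OF p_in_A] vd1_IbarC S(1) M differentiable_IbarC by simp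
  also have "\<dots> = F p * sqrt (eps * rho p) * spray_op F I p + sqrt (eps * rho p) / (2 * rho p) *
       ( ((F p)\<^sup>2 * hd1 F rho p - 2 * eps * QC F eps m I phi p * d2 rho p)
           * (I p + 2 * eps * d2 phi p + eps * d2 rho p / (2 * rho p))
         + (F p)\<^sup>2 * (4 * eps * rho p * hd1 F (d2 phi) p - eps * hd1 F (d2 rho) p)
         - 2 * QC F eps m I phi p * (2 * eps * rho p * d2 I p + 4 * rho p * d2 (d2 phi) p - d2 (d2 rho) p))"
    unfolding dir_deriv_IbarC Ibar_core_def S[OF differentiable_at_p(1)] S[OF differentiable_at_p(2)]
      S[OF differentiable_at_p(3)] S[OF differentiable_at_p(4)] M[OF differentiable_at_p(1)]
      M[OF differentiable_at_p(2)] M[OF differentiable_at_p(3)] M[OF differentiable_at_p(4)]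
    using landsberg_identity[OF eps_cases real_sqrt_gt_zero[OF eps_rho_p_pos] real_sqrt_pow2[OF less_imp_le[OF eps_rho_p_pos]]
        rho_nonzero[OF p_in_A] F_nonzero[OF p_in_A]]
    by simp
  finally show ?thesis .
qed

end

context conformal_change
begin

lemma landsberg_scalar:
  assumes p: "p \<in> A"
  shows "F p * spray_with (GbarC F eps m I phi) (IbarC F eps m I phi) p =
     F p * sqrt (eps * rho p) * spray_op F I p
     + sqrt (eps * rho p) / (2 * rho p) *
       ( ((F p)\<^sup>2 * hd1 F rho p - 2 * eps * QC F eps m I phi p * d2 rho p)
           * (I p + 2 * eps * d2 phi p + eps * d2 rho p / (2 * rho p))
         + (F p)\<^sup>2 * (4 * eps * rho p * hd1 F (d2 phi) p - eps * hd1 F (d2 rho) p)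
         - 2 * QC F eps m I phi p * (2 * eps * rho p * d2 I p + 4 * rho p * d2 (d2 phi) p - d2 (d2 rho) p))"
proof -
  obtain k where "m k p \<noteq> 0" using frame_nonvanishing[OF p] by blast
  then interpret conformal_change_chart A F phi I eps m k p
    using p by unfold_locales
  show ?thesis by (rule landsberg_scalar_at_p)
qed

end

theorem proposition4p3:
  fixes A :: "pt set" and F phi I :: "pt \<Rightarrow> real" and eps :: real
    and m :: "2 \<Rightarrow> pt \<Rightarrow> real"
  assumes "conic_pseudo_finsler A F"
    and "berwald_frame A F eps m"
    and "main_scalar A F m I"
    and "admissible_phi A F eps m phi"
    and "\<forall>p\<in>A. eps * rhoC F eps m I phi p > 0"
  shows "\<forall>p\<in>A.
    (let \<rho> = rhoC F eps m I phi; Q = QC F eps m I phi p;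
         d2 = vd2 F eps m; J = spray_op F I;
         Jbar = spray_with (GbarC F eps m I phi) (IbarC F eps m I phi)
     in F p * Jbar p =
        F p * sqrt (eps * \<rho> p) * J p
        + sqrt (eps * \<rho> p) / (2 * \<rho> p) *
          ( ((F p)\<^sup>2 * hd1 F \<rho> p - 2 * eps * Q * d2 \<rho> p)
              * (I p + 2 * eps * d2 phi p + eps * d2 \<rho> p / (2 * \<rho> p))
            + (F p)\<^sup>2 * (4 * eps * \<rho> p * hd1 F (d2 phi) p - eps * hd1 F (d2 \<rho>) p)
            - 2 * Q * (2 * eps * \<rho> p * d2 I p + 4 * \<rho> p * d2 (d2 phi) p - d2 (d2 \<rho>) p)))"
proof -
  interpret conformal_change A F phi I eps m
    using assms by unfold_locales
  show ?thesis unfolding Let_def by (intro ballI landsberg_scalar)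
qed

end
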